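(* Let $\{(\Gamma_t,\theta_t)\}_{t\in[0,\underline t)}$ solve the framed curvature flow and let $A_p(\Gamma_t):=\frac12\int_{\Gamma_t}\gamma\times\partial_s\gamma\,ds\in\mathbb{R}^3$. Then $$\frac{d}{dt}A_p(\Gamma_t)=-\int_{\Gamma_t}\kappa\,\beta_\theta\,ds .$$
   Context: $S^1=\mathbb{R}/2\pi\mathbb{Z}$; closed curves $\Gamma_t$ parametrized by $\gamma(t,\cdot):S^1\to\mathbb{R}^3$, $g=\|\partial_u\gamma\|$, $ds=g\,du$, $\partial_s=g^{-1}\partial_u$; Frenet frame $T,N,B$, curvature $\kappa$; angle function $\theta$, $\theta$-normal $\nu_\theta=\cos\theta N+\sin\theta B$, $\theta$-binormal $\beta_\theta=-\sin\theta N+\cos\theta B=T\times\nu_\theta$. Framed curvature flow: $\partial_t\gamma=\kappa\nu_\theta$, $\partial_t\theta=\upsilon_\theta$. *)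

theory Defs
  imports "HOL-Analysis.Analysis"
begin

text \<open>Smoothness (C-infinity) of a function of two real variables (t,u) on a set S:
  f is differentiable (relative to S) with partial derivatives f1 (in t) and f2 (in u),
  and these partial derivatives are again smooth on S.\<close>
coinductive smooth_on :: "(real \<times> real) set \<Rightarrow> (real \<times> real \<Rightarrow> 'a::real_normed_vector) \<Rightarrow> bool" where
  smooth_onI: "(\<forall>x\<in>S. (f has_derivative (\<lambda>h. fst h *\<^sub>R f1 x + snd h *\<^sub>R f2 x)) (at x within S))
    \<Longrightarrow> smooth_on S f1 \<Longrightarrow> smooth_on S f2 \<Longrightarrow> smooth_on S f"

definition d_u :: "(real \<times> real \<Rightarrow> real^3) \<Rightarrow> real \<Rightarrow> real \<Rightarrow> real^3" where
  "d_u F t u = vector_derivative (\<lambda>v. F (t, v)) (at u)"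

definition speed :: "(real \<times> real \<Rightarrow> real^3) \<Rightarrow> real \<Rightarrow> real \<Rightarrow> real" where
  "speed \<gamma> t u = norm (d_u \<gamma> t u)"

definition d_s :: "(real \<times> real \<Rightarrow> real^3) \<Rightarrow> (real \<times> real \<Rightarrow> real^3) \<Rightarrow> real \<Rightarrow> real \<Rightarrow> real^3" where
  "d_s \<gamma> F t u = (1 / speed \<gamma> t u) *\<^sub>R d_u F t u"

definition tangent :: "(real \<times> real \<Rightarrow> real^3) \<Rightarrow> real \<Rightarrow> real \<Rightarrow> real^3" where
  "tangent \<gamma> t u = d_s \<gamma> \<gamma> t u"

definition curvature :: "(real \<times> real \<Rightarrow> real^3) \<Rightarrow> real \<Rightarrow> real \<Rightarrow> real" where
  "curvature \<gamma> t u = norm (d_s \<gamma> (\<lambda>(t',u'). tangent \<gamma> t' u') t u)"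

definition normal :: "(real \<times> real \<Rightarrow> real^3) \<Rightarrow> real \<Rightarrow> real \<Rightarrow> real^3" where
  "normal \<gamma> t u = (1 / curvature \<gamma> t u) *\<^sub>R d_s \<gamma> (\<lambda>(t',u'). tangent \<gamma> t' u') t u"

definition binormal :: "(real \<times> real \<Rightarrow> real^3) \<Rightarrow> real \<Rightarrow> real \<Rightarrow> real^3" where
  "binormal \<gamma> t u = cross3 (tangent \<gamma> t u) (normal \<gamma> t u)"

definition theta_normal :: "(real \<times> real \<Rightarrow> real^3) \<Rightarrow> (real \<times> real \<Rightarrow> real) \<Rightarrow> real \<Rightarrow> real \<Rightarrow> real^3" where
  "theta_normal \<gamma> \<theta> t u = cos (\<theta> (t, u)) *\<^sub>R normal \<gamma> t u + sin (\<theta> (t, u)) *\<^sub>R binormal \<gamma> t u"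

definition theta_binormal :: "(real \<times> real \<Rightarrow> real^3) \<Rightarrow> (real \<times> real \<Rightarrow> real) \<Rightarrow> real \<Rightarrow> real \<Rightarrow> real^3" where
  "theta_binormal \<gamma> \<theta> t u = - sin (\<theta> (t, u)) *\<^sub>R normal \<gamma> t u + cos (\<theta> (t, u)) *\<^sub>R binormal \<gamma> t u"

text \<open>Integral over the closed curve Gamma_t with respect to arc length: S^1 = [0,2pi], ds = g du.\<close>
definition curve_integral_ds :: "(real \<times> real \<Rightarrow> real^3) \<Rightarrow> real \<Rightarrow> (real \<Rightarrow> real^3) \<Rightarrow> real^3" where
  "curve_integral_ds \<gamma> t F = integral {0..2*pi} (\<lambda>u. speed \<gamma> t u *\<^sub>R F u)"

definition area_vector :: "(real \<times> real \<Rightarrow> real^3) \<Rightarrow> real \<Rightarrow> real^3" where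
  "area_vector \<gamma> t = (1/2) *\<^sub>R curve_integral_ds \<gamma> t (\<lambda>u. cross3 (\<gamma> (t, u)) (d_s \<gamma> \<gamma> t u))"

text \<open>Framed curvature flow on [0,T): smooth, 2pi-periodic in u, regular, Frenet frame defined
  (positive curvature), and d_t gamma = kappa nu_theta.  The equation d_t theta = upsilon_theta
  merely names the time derivative of theta.\<close>
definition framed_curvature_flow :: "real \<Rightarrow> (real \<times> real \<Rightarrow> real^3) \<Rightarrow> (real \<times> real \<Rightarrow> real) \<Rightarrow> bool" where
  "framed_curvature_flow T \<gamma> \<theta> \<longleftrightarrow>
     smooth_on ({0..<T} \<times> UNIV) \<gamma> \<and> smooth_on ({0..<T} \<times> UNIV) \<theta> \<and>
     (\<forall>t\<in>{0..<T}. \<forall>u. \<gamma> (t, u + 2*pi) = \<gamma> (t, u) \<and> \<theta> (t, u + 2*pi) = \<theta> (t, u)) \<and>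
     (\<forall>t\<in>{0..<T}. \<forall>u. speed \<gamma> t u > 0 \<and> curvature \<gamma> t u > 0) \<and>
     (\<forall>t\<in>{0..<T}. \<forall>u. ((\<lambda>t'. \<gamma> (t', u)) has_vector_derivative
         (curvature \<gamma> t u *\<^sub>R theta_normal \<gamma> \<theta> t u)) (at t within {0..<T}))"

end

theory Submission
  imports Defs
begin

text \<open>Write \<open>A(t) = \<onehalf> \<integral> \<gamma> \<times> \<gamma>\<^sub>u du\<close> over \<open>[0, 2\<pi>]\<close>. Differentiating under the integral sign gives
  \<open>A' = \<onehalf> \<integral> (\<gamma>\<^sub>t \<times> \<gamma>\<^sub>u + \<gamma> \<times> \<gamma>\<^sub>u\<^sub>t) du\<close>. Since \<open>\<gamma>\<^sub>u\<^sub>t = \<gamma>\<^sub>t\<^sub>u\<close>, integrating the second term by parts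
  over the closed curve turns it into the first one, so \<open>A' = \<integral> \<gamma>\<^sub>t \<times> \<gamma>\<^sub>u du\<close>. Along the flow
  \<open>\<gamma>\<^sub>t = \<kappa> \<nu>\<^sub>\<theta>\<close> and \<open>\<gamma>\<^sub>u = g T\<close>, and \<open>\<nu>\<^sub>\<theta> \<times> T = -\<beta>\<^sub>\<theta>\<close> because \<open>(T, N, B)\<close> is a positively
  oriented orthonormal frame; hence \<open>A' = -\<integral> \<kappa> \<beta>\<^sub>\<theta> g du = -\<integral> \<kappa> \<beta>\<^sub>\<theta> ds\<close>.\<close>

lemma smooth_onE:
  assumes "smooth_on S f"
  obtains f1 f2 where
    "\<And>x. x \<in> S \<Longrightarrow> (f has_derivative (\<lambda>h. fst h *\<^sub>R f1 x + snd h *\<^sub>R f2 x)) (at x within S)"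
    "smooth_on S f1" "smooth_on S f2"
  using assms by (cases rule: smooth_on.cases) blast

lemma smooth_on_imp_continuous_on:
  assumes "smooth_on S f"
  shows "continuous_on S f"
  using assms
  by (rule smooth_onE) (auto simp: continuous_on_eq_continuous_within intro: has_derivative_continuous)

lemma smooth_on_partial_derivatives:
  assumes "smooth_on (U \<times> UNIV) f"
  obtains f1 f2 where "smooth_on (U \<times> UNIV) f1" "smooth_on (U \<times> UNIV) f2"
    "\<And>t u. t \<in> U \<Longrightarrow> ((\<lambda>s. f (s, u)) has_vector_derivative f1 (t, u)) (at t within U)"
    "\<And>t u. t \<in> U \<Longrightarrow> ((\<lambda>v. f (t, v)) has_vector_derivative f2 (t, u)) (at u)"
proof -
  obtain f1 f2 where
    f': "\<And>x. x \<in> U \<times> UNIV \<Longrightarrow> (f has_derivative (\<lambda>h. fst h *\<^sub>R f1 x + snd h *\<^sub>R f2 x)) (at x within U \<times> UNIV)"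
    and smooth: "smooth_on (U \<times> UNIV) f1" "smooth_on (U \<times> UNIV) f2"
    using assms by (rule smooth_onE) blast
  have "((\<lambda>s. f (s, u)) has_vector_derivative f1 (t, u)) (at t within U)" if "t \<in> U" for t u
  proof -
    have "((\<lambda>s. (s, u)) has_derivative (\<lambda>h. (h, 0))) (at t within U)"
      by (auto intro!: derivative_eq_intros)
    from has_derivative_in_compose2[OF f' _ that this] show ?thesis
      by (auto simp: has_vector_derivative_def)
  qed
  moreover have "((\<lambda>v. f (t, v)) has_vector_derivative f2 (t, u)) (at u)" if "t \<in> U" for t u
  proof -
    have "((\<lambda>v. (t, v)) has_derivative (\<lambda>h. (0, h))) (at u within UNIV)"
      by (auto intro!: derivative_eq_intros)
    from has_derivative_in_compose2[OF f' _ _ this] that show ?thesis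
      by (auto simp: has_vector_derivative_def)
  qed
  ultimately show ?thesis by (rule that[OF smooth])
qed

lemma continuous_on_Pair_slice:
  assumes "continuous_on (U \<times> UNIV) f" "t \<in> U"
  shows "continuous_on A (\<lambda>v. f (t, v))"
  by (rule continuous_on_compose2[OF assms(1)]) (use assms(2) in \<open>auto intro!: continuous_intros\<close>)

lemma at_within_atLeastLessThan_neq_bot:
  fixes t :: real
  assumes "t \<in> {a..<b}"
  shows "at t within {a..<b} \<noteq> bot"
  using assms trivial_limit_within[of t "{a..<b}"] by (auto simp: trivial_limit_def)

lemma bounded_bilinear_cross3: "bounded_bilinear cross3"
  using bilinear_conv_bounded_bilinear bilinear_cross by blast

lemma has_vector_derivative_integral_bilinear:
  fixes f :: "real \<times> real \<Rightarrow> 'a::real_normed_vector" and g :: "real \<times> real \<Rightarrow> 'b::real_normed_vector"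
    and prod :: "'a \<Rightarrow> 'b \<Rightarrow> 'c::banach"
  assumes prod: "bounded_bilinear prod" and U: "convex U" "t \<in> U"
    and ft: "\<And>s v. s \<in> U \<Longrightarrow> ((\<lambda>s. f (s, v)) has_vector_derivative f1 (s, v)) (at s within U)"
    and gt: "\<And>s v. s \<in> U \<Longrightarrow> ((\<lambda>s. g (s, v)) has_vector_derivative g1 (s, v)) (at s within U)"
    and cont: "continuous_on (U \<times> UNIV) f" "continuous_on (U \<times> UNIV) f1"
      "continuous_on (U \<times> UNIV) g" "continuous_on (U \<times> UNIV) g1"
  shows "((\<lambda>s. integral {a..b} (\<lambda>v. prod (f (s, v)) (g (s, v)))) has_vector_derivative
      integral {a..b} (\<lambda>v. prod (f (t, v)) (g1 (t, v)) + prod (f1 (t, v)) (g (t, v)))) (at t within U)"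
proof -
  interpret bounded_bilinear prod by (fact prod)
  have "((\<lambda>s. integral (cbox a b) (\<lambda>v. prod (f (s, v)) (g (s, v)))) has_vector_derivative
      integral (cbox a b) (\<lambda>v. prod (f (t, v)) (g1 (t, v)) + prod (f1 (t, v)) (g (t, v)))) (at t within U)"
  proof (rule leibniz_rule_vector_derivative[OF _ _ _ U(2,1)])
    fix s v assume "s \<in> U"
    then show "((\<lambda>s. prod (f (s, v)) (g (s, v))) has_vector_derivative
        prod (f (s, v)) (g1 (s, v)) + prod (f1 (s, v)) (g (s, v))) (at s within U)"
      by (intro has_vector_derivative ft gt)
  next
    fix s assume "s \<in> U"
    then show "(\<lambda>v. prod (f (s, v)) (g (s, v))) integrable_on cbox a b"
      by (intro integrable_continuous continuous_on[OF continuous_on_Pair_slice[OF cont(1)]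
          continuous_on_Pair_slice[OF cont(3)]])
  next
    have restrict: "continuous_on (U \<times> cbox a b) h" if "continuous_on (U \<times> UNIV) h"
      for h :: "real \<times> real \<Rightarrow> 'd::topological_space"
      using that by (rule continuous_on_subset) auto
    have "continuous_on (U \<times> cbox a b) (\<lambda>p. prod (f p) (g1 p) + prod (f1 p) (g p))"
      using continuous_on_add[OF continuous_on[OF restrict[OF cont(1)] restrict[OF cont(4)]]
          continuous_on[OF restrict[OF cont(2)] restrict[OF cont(3)]]] .
    then show "continuous_on (U \<times> cbox a b)
        (\<lambda>(s, v). prod (f (s, v)) (g1 (s, v)) + prod (f1 (s, v)) (g (s, v)))"
      by (simp add: case_prod_beta')
  qed
  then show ?thesis
    by (simp only: box_real)
qed

text \<open>The mixed partial derivatives agree, with no second-order hypothesis on \<open>f\<close> itself: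
  differentiate \<open>f (s, w) - f (s, a) = \<integral>\<^sub>a\<^sup>w f2 (s, v) dv\<close> in \<open>s\<close> under the integral sign.\<close>

lemma partial_derivative_diff_eq_integral_mixed:
  fixes f :: "real \<times> real \<Rightarrow> 'a::banach"
  assumes U: "convex U" "t \<in> U" "at t within U \<noteq> bot" and "a \<le> w"
    and ft: "\<And>v. ((\<lambda>s. f (s, v)) has_vector_derivative f1 v) (at t within U)"
    and fu: "\<And>s v. s \<in> U \<Longrightarrow> ((\<lambda>v. f (s, v)) has_vector_derivative f2 (s, v)) (at v)"
    and f2t: "\<And>s v. s \<in> U \<Longrightarrow> ((\<lambda>s. f2 (s, v)) has_vector_derivative f21 (s, v)) (at s within U)"
    and cont: "continuous_on (U \<times> UNIV) f2" "continuous_on (U \<times> UNIV) f21"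
  shows "f1 w - f1 a = integral {a..w} (\<lambda>v. f21 (t, v))"
proof -
  have f_eq: "f (s, w) - f (s, a) = integral {a..w} (\<lambda>v. f2 (s, v))" if "s \<in> U" for s
  proof -
    have "((\<lambda>v. f2 (s, v)) has_integral f (s, w) - f (s, a)) {a..w}"
      by (rule fundamental_theorem_of_calculus[OF \<open>a \<le> w\<close>])
        (rule has_vector_derivative_at_within[OF fu[OF that]])
    then show ?thesis
      by (rule integral_unique[symmetric])
  qed
  have "((\<lambda>s. integral (cbox a w) (\<lambda>v. f2 (s, v))) has_vector_derivative
      integral (cbox a w) (\<lambda>v. f21 (t, v))) (at t within U)"
  proof (rule leibniz_rule_vector_derivative[OF _ _ _ U(2,1)])
    show "((\<lambda>s. f2 (s, v)) has_vector_derivative f21 (s, v)) (at s within U)" if "s \<in> U" for s v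
      using f2t[OF that] .
    show "(\<lambda>v. f2 (s, v)) integrable_on cbox a w" if "s \<in> U" for s
      by (intro integrable_continuous continuous_on_Pair_slice[OF cont(1) that])
    show "continuous_on (U \<times> cbox a w) (\<lambda>(s, v). f21 (s, v))"
      unfolding case_prod_eta by (rule continuous_on_subset[OF cont(2)]) auto
  qed
  then have "((\<lambda>s. integral {a..w} (\<lambda>v. f2 (s, v))) has_vector_derivative
      integral {a..w} (\<lambda>v. f21 (t, v))) (at t within U)"
    by (simp only: box_real)
  moreover have "((\<lambda>s. integral {a..w} (\<lambda>v. f2 (s, v))) has_vector_derivative f1 w - f1 a)
      (at t within U)"
    by (rule has_vector_derivative_transform_within[OF has_vector_derivative_diff[OF ft ft]
          zero_less_one U(2)]) (rule f_eq)
  ultimately show ?thesis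
    by (rule vector_derivative_unique_within[OF U(3), symmetric])
qed

lemma has_vector_derivative_mixed_partial:
  fixes f :: "real \<times> real \<Rightarrow> 'a::banach"
  assumes U: "convex U" "t \<in> U" "at t within U \<noteq> bot"
    and ft: "\<And>v. ((\<lambda>s. f (s, v)) has_vector_derivative f1 v) (at t within U)"
    and fu: "\<And>s v. s \<in> U \<Longrightarrow> ((\<lambda>v. f (s, v)) has_vector_derivative f2 (s, v)) (at v)"
    and f2t: "\<And>s v. s \<in> U \<Longrightarrow> ((\<lambda>s. f2 (s, v)) has_vector_derivative f21 (s, v)) (at s within U)"
    and cont: "continuous_on (U \<times> UNIV) f2" "continuous_on (U \<times> UNIV) f21"
  shows "(f1 has_vector_derivative f21 (t, u)) (at u)"
proof -
  define a where "a = u - 1"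
  have "((\<lambda>w. integral {a..w} (\<lambda>v. f21 (t, v))) has_vector_derivative f21 (t, u)) (at u within {a..u + 1})"
    by (rule integral_has_vector_derivative[OF continuous_on_Pair_slice[OF cont(2) U(2)]])
      (simp add: a_def)
  then have "((\<lambda>w. f1 a + integral {a..w} (\<lambda>v. f21 (t, v))) has_vector_derivative 0 + f21 (t, u))
      (at u within {a<..<u + 1})"
    by (rule has_vector_derivative_add[OF has_vector_derivative_const
          has_vector_derivative_within_subset]) auto
  then have integral_deriv: "((\<lambda>w. f1 a + integral {a..w} (\<lambda>v. f21 (t, v))) has_vector_derivative
      f21 (t, u)) (at u)"
    by (subst (asm) has_vector_derivative_within_open) (auto simp: a_def)
  have "f1 a + integral {a..w} (\<lambda>v. f21 (t, v)) = f1 w" if "w \<in> {a<..<u + 1}" for w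
    using partial_derivative_diff_eq_integral_mixed[OF U _ ft fu f2t cont, of a w] that
    by (metis add.commute diff_add_cancel greaterThanLessThan_iff less_imp_le)
  moreover have "u \<in> {a<..<u + 1}"
    by (simp add: a_def)
  ultimately show ?thesis
    using has_vector_derivative_transform_within_open[OF integral_deriv open_greaterThanLessThan] by blast
qed

lemma integral_cross3_by_parts_periodic:
  fixes f g :: "real \<Rightarrow> real^3"
  assumes "a \<le> b"
    and f': "\<And>u. (f has_vector_derivative f' u) (at u)" and g': "\<And>u. (g has_vector_derivative g' u) (at u)"
    and "continuous_on {a..b} g'" and "f b = f a" "g b = g a"
  shows "integral {a..b} (\<lambda>u. cross3 (f u) (g' u)) = integral {a..b} (\<lambda>u. cross3 (g u) (f' u))"
proof -
  have cont: "continuous_on {a..b} f" "continuous_on {a..b} g"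
    using f' g' by (meson continuous_on_vector_derivative has_vector_derivative_at_within)+
  have "((\<lambda>u. cross3 (f u) (g' u)) has_integral integral {a..b} (\<lambda>u. cross3 (f u) (g' u))) {a..b}"
    by (intro integrable_integral integrable_continuous_interval continuous_on_cross cont assms(4))
  then have "((\<lambda>u. cross3 (f u) (g' u)) has_integral
      cross3 (f b) (g b) - cross3 (f a) (g a) - - integral {a..b} (\<lambda>u. cross3 (f u) (g' u))) {a..b}"
    by (simp add: assms(5,6))
  from integration_by_parts_interior[OF bounded_bilinear_cross3 assms(1) cont f' g' this]
  have "integral {a..b} (\<lambda>u. cross3 (f' u) (g u)) = - integral {a..b} (\<lambda>u. cross3 (f u) (g' u))"
    by (rule integral_unique)
  then show ?thesis
    by (simp add: cross_skew[of "f' _"] integral_neg)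
qed

lemma has_vector_derivative_integral_cross3_periodic:
  fixes \<gamma> \<gamma>\<^sub>t \<gamma>\<^sub>u \<gamma>\<^sub>u\<^sub>t :: "real \<times> real \<Rightarrow> real^3"
  assumes U: "convex U" "t \<in> U" "at t within U \<noteq> bot"
    and periodic: "\<And>s u. s \<in> U \<Longrightarrow> \<gamma> (s, u + 2*pi) = \<gamma> (s, u)"
    and \<gamma>\<^sub>t: "\<And>s u. s \<in> U \<Longrightarrow> ((\<lambda>s. \<gamma> (s, u)) has_vector_derivative \<gamma>\<^sub>t (s, u)) (at s within U)"
    and \<gamma>\<^sub>u: "\<And>s u. s \<in> U \<Longrightarrow> ((\<lambda>v. \<gamma> (s, v)) has_vector_derivative \<gamma>\<^sub>u (s, u)) (at u)"
    and \<gamma>\<^sub>u\<^sub>t: "\<And>s u. s \<in> U \<Longrightarrow> ((\<lambda>s. \<gamma>\<^sub>u (s, u)) has_vector_derivative \<gamma>\<^sub>u\<^sub>t (s, u)) (at s within U)"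
    and cont: "continuous_on (U \<times> UNIV) \<gamma>" "continuous_on (U \<times> UNIV) \<gamma>\<^sub>t"
      "continuous_on (U \<times> UNIV) \<gamma>\<^sub>u" "continuous_on (U \<times> UNIV) \<gamma>\<^sub>u\<^sub>t"
  shows "((\<lambda>s. integral {0..2*pi} (\<lambda>u. cross3 (\<gamma> (s, u)) (\<gamma>\<^sub>u (s, u)))) has_vector_derivative
      2 *\<^sub>R integral {0..2*pi} (\<lambda>u. cross3 (\<gamma>\<^sub>t (t, u)) (\<gamma>\<^sub>u (t, u)))) (at t within U)"
proof -
  have integrable: "(\<lambda>u. cross3 (h1 (t, u)) (h2 (t, u))) integrable_on {0..2*pi}"
    if "continuous_on (U \<times> UNIV) h1" "continuous_on (U \<times> UNIV) h2" for h1 h2 :: "real \<times> real \<Rightarrow> real^3"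
    by (intro integrable_continuous_interval continuous_on_cross continuous_on_Pair_slice[OF that(1) U(2)]
        continuous_on_Pair_slice[OF that(2) U(2)])
  have \<gamma>\<^sub>t_periodic: "\<gamma>\<^sub>t (t, 2*pi) = \<gamma>\<^sub>t (t, 0)"
  proof -
    have "((\<lambda>s. \<gamma> (s, 0 + 2*pi)) has_vector_derivative \<gamma>\<^sub>t (t, 0)) (at t within U)"
      by (rule has_vector_derivative_transform_within[OF \<gamma>\<^sub>t[OF U(2)] zero_less_one U(2)])
        (use periodic[of _ 0] in simp)
    then show ?thesis
      using vector_derivative_unique_within[OF U(3) \<gamma>\<^sub>t[OF U(2)]] by simp
  qed
  have "integral {0..2*pi} (\<lambda>u. cross3 (\<gamma> (t, u)) (\<gamma>\<^sub>u\<^sub>t (t, u)))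
      = integral {0..2*pi} (\<lambda>u. cross3 (\<gamma>\<^sub>t (t, u)) (\<gamma>\<^sub>u (t, u)))"
  proof (rule integral_cross3_by_parts_periodic)
    show "((\<lambda>v. \<gamma>\<^sub>t (t, v)) has_vector_derivative \<gamma>\<^sub>u\<^sub>t (t, u)) (at u)" for u
      by (rule has_vector_derivative_mixed_partial[OF U \<gamma>\<^sub>t[OF U(2)] \<gamma>\<^sub>u \<gamma>\<^sub>u\<^sub>t cont(3,4)])
  qed (use \<gamma>\<^sub>u[OF U(2)] continuous_on_Pair_slice[OF cont(4) U(2)] periodic[OF U(2), of 0] \<gamma>\<^sub>t_periodic in auto)
  moreover have "((\<lambda>s. integral {0..2*pi} (\<lambda>u. cross3 (\<gamma> (s, u)) (\<gamma>\<^sub>u (s, u)))) has_vector_derivative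
      integral {0..2*pi} (\<lambda>u. cross3 (\<gamma> (t, u)) (\<gamma>\<^sub>u\<^sub>t (t, u)) + cross3 (\<gamma>\<^sub>t (t, u)) (\<gamma>\<^sub>u (t, u))))
      (at t within U)"
    by (rule has_vector_derivative_integral_bilinear[OF bounded_bilinear_cross3 U(1,2) \<gamma>\<^sub>t \<gamma>\<^sub>u\<^sub>t cont])
  ultimately show ?thesis
    by (simp add: integral_add[OF integrable[OF cont(1,4)] integrable[OF cont(2,3)]] scaleR_2)
qed

lemma d_u_eqI:
  assumes "((\<lambda>v. F (t, v)) has_vector_derivative F') (at u)"
  shows "d_u F t u = F'"
  using assms by (simp add: d_u_def vector_derivative_at)

text \<open>No regularity is needed: where the speed vanishes, \<open>d_s\<close> is the junk value \<open>0\<close>, but so is \<open>d_u\<close>.\<close>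

lemma area_vector_eq_integral_d_u:
  "area_vector \<gamma> t = (1/2) *\<^sub>R integral {0..2*pi} (\<lambda>u. cross3 (\<gamma> (t, u)) (d_u \<gamma> t u))"
proof -
  have "speed \<gamma> t u *\<^sub>R cross3 (\<gamma> (t, u)) (d_s \<gamma> \<gamma> t u) = cross3 (\<gamma> (t, u)) (d_u \<gamma> t u)" for u
    by (cases "d_u \<gamma> t u = 0") (simp_all add: d_s_def speed_def cross_mult_right)
  then show ?thesis
    by (simp add: area_vector_def curve_integral_ds_def)
qed

lemma area_vector_has_vector_derivative:
  fixes \<gamma> :: "real \<times> real \<Rightarrow> real^3"
  assumes smooth: "smooth_on (U \<times> UNIV) \<gamma>" and U: "convex U" "t \<in> U" "at t within U \<noteq> bot"
    and periodic: "\<And>s u. s \<in> U \<Longrightarrow> \<gamma> (s, u + 2*pi) = \<gamma> (s, u)"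
    and velocity: "\<And>u. ((\<lambda>s. \<gamma> (s, u)) has_vector_derivative V u) (at t within U)"
  shows "(area_vector \<gamma> has_vector_derivative integral {0..2*pi} (\<lambda>u. cross3 (V u) (d_u \<gamma> t u)))
    (at t within U)"
proof -
  obtain \<gamma>\<^sub>t \<gamma>\<^sub>u where smooth_t: "smooth_on (U \<times> UNIV) \<gamma>\<^sub>t" and smooth_u: "smooth_on (U \<times> UNIV) \<gamma>\<^sub>u"
    and \<gamma>\<^sub>t: "\<And>s u. s \<in> U \<Longrightarrow> ((\<lambda>s. \<gamma> (s, u)) has_vector_derivative \<gamma>\<^sub>t (s, u)) (at s within U)"
    and \<gamma>\<^sub>u: "\<And>s u. s \<in> U \<Longrightarrow> ((\<lambda>v. \<gamma> (s, v)) has_vector_derivative \<gamma>\<^sub>u (s, u)) (at u)"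
    using smooth by (rule smooth_on_partial_derivatives) blast
  obtain \<gamma>\<^sub>u\<^sub>t \<gamma>\<^sub>u\<^sub>u where smooth_ut: "smooth_on (U \<times> UNIV) \<gamma>\<^sub>u\<^sub>t" "smooth_on (U \<times> UNIV) \<gamma>\<^sub>u\<^sub>u"
    and \<gamma>\<^sub>u\<^sub>t: "\<And>s u. s \<in> U \<Longrightarrow> ((\<lambda>s. \<gamma>\<^sub>u (s, u)) has_vector_derivative \<gamma>\<^sub>u\<^sub>t (s, u)) (at s within U)"
    and "\<And>s u. s \<in> U \<Longrightarrow> ((\<lambda>v. \<gamma>\<^sub>u (s, v)) has_vector_derivative \<gamma>\<^sub>u\<^sub>u (s, u)) (at u)"
    using smooth_u by (rule smooth_on_partial_derivatives) blast
  note cont = smooth_on_imp_continuous_on[OF smooth] smooth_on_imp_continuous_on[OF smooth_t]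
    smooth_on_imp_continuous_on[OF smooth_u] smooth_on_imp_continuous_on[OF smooth_ut(1)]
  have V: "V u = \<gamma>\<^sub>t (t, u)" for u
    using vector_derivative_unique_within[OF U(3) velocity \<gamma>\<^sub>t[OF U(2)]] .
  have d_u: "d_u \<gamma> s u = \<gamma>\<^sub>u (s, u)" if "s \<in> U" for s u
    by (rule d_u_eqI[OF \<gamma>\<^sub>u[OF that]])
  have "((\<lambda>s. (1/2) *\<^sub>R integral {0..2*pi} (\<lambda>u. cross3 (\<gamma> (s, u)) (\<gamma>\<^sub>u (s, u)))) has_vector_derivative
      (1/2) *\<^sub>R 2 *\<^sub>R integral {0..2*pi} (\<lambda>u. cross3 (\<gamma>\<^sub>t (t, u)) (\<gamma>\<^sub>u (t, u)))) (at t within U)"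
    by (rule bounded_linear.has_vector_derivative[OF bounded_linear_scaleR_right
          has_vector_derivative_integral_cross3_periodic[OF U periodic \<gamma>\<^sub>t \<gamma>\<^sub>u \<gamma>\<^sub>u\<^sub>t cont]])
  then have "((\<lambda>s. (1/2) *\<^sub>R integral {0..2*pi} (\<lambda>u. cross3 (\<gamma> (s, u)) (\<gamma>\<^sub>u (s, u)))) has_vector_derivative
      integral {0..2*pi} (\<lambda>u. cross3 (\<gamma>\<^sub>t (t, u)) (\<gamma>\<^sub>u (t, u)))) (at t within U)"
    by simp
  then show ?thesis
    unfolding V d_u[OF U(2)]
    by (rule has_vector_derivative_transform_within[OF _ zero_less_one U(2)])
      (simp add: area_vector_eq_integral_d_u d_u)
qed

lemma has_vector_derivative_unit_orthogonal:
  fixes f :: "real \<Rightarrow> 'a::real_inner"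
  assumes "\<And>v. f v \<bullet> f v = 1" and "(f has_vector_derivative f') (at u)"
  shows "f u \<bullet> f' = 0"
proof -
  have "((\<lambda>v. f v \<bullet> f v) has_vector_derivative f u \<bullet> f' + f' \<bullet> f u) (at u)"
    by (rule bounded_bilinear.has_vector_derivative[OF bounded_bilinear_inner assms(2) assms(2)])
  moreover have "((\<lambda>v. f v \<bullet> f v) has_vector_derivative 0) (at u)"
    by (simp add: assms(1))
  ultimately show ?thesis
    by (auto dest: vector_derivative_unique_at simp: inner_commute)
qed

lemma tangent_inner_self:
  assumes "speed \<gamma> t u > 0"
  shows "tangent \<gamma> t u \<bullet> tangent \<gamma> t u = 1"
  using assms by (simp add: tangent_def d_s_def speed_def dot_square_norm power2_eq_square)

lemma smooth_on_imp_differentiable_d_u: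
  assumes "smooth_on (U \<times> UNIV) \<gamma>" "t \<in> U"
  shows "(\<lambda>v. d_u \<gamma> t v) differentiable (at u)"
proof -
  obtain \<gamma>\<^sub>t \<gamma>\<^sub>u where "smooth_on (U \<times> UNIV) \<gamma>\<^sub>t" "smooth_on (U \<times> UNIV) \<gamma>\<^sub>u"
    and "\<And>s v. s \<in> U \<Longrightarrow> ((\<lambda>s. \<gamma> (s, v)) has_vector_derivative \<gamma>\<^sub>t (s, v)) (at s within U)"
    and \<gamma>\<^sub>u: "\<And>s v. s \<in> U \<Longrightarrow> ((\<lambda>v. \<gamma> (s, v)) has_vector_derivative \<gamma>\<^sub>u (s, v)) (at v)"
    using assms(1) by (rule smooth_on_partial_derivatives) blast
  obtain \<gamma>\<^sub>u\<^sub>t \<gamma>\<^sub>u\<^sub>u where "smooth_on (U \<times> UNIV) \<gamma>\<^sub>u\<^sub>t" "smooth_on (U \<times> UNIV) \<gamma>\<^sub>u\<^sub>u"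
    and "\<And>s v. s \<in> U \<Longrightarrow> ((\<lambda>s. \<gamma>\<^sub>u (s, v)) has_vector_derivative \<gamma>\<^sub>u\<^sub>t (s, v)) (at s within U)"
    and \<gamma>\<^sub>u\<^sub>u: "\<And>s v. s \<in> U \<Longrightarrow> ((\<lambda>v. \<gamma>\<^sub>u (s, v)) has_vector_derivative \<gamma>\<^sub>u\<^sub>u (s, v)) (at v)"
    using \<open>smooth_on (U \<times> UNIV) \<gamma>\<^sub>u\<close> by (rule smooth_on_partial_derivatives) blast
  have "d_u \<gamma> t = (\<lambda>v. \<gamma>\<^sub>u (t, v))"
    using \<gamma>\<^sub>u[OF assms(2)] by (simp add: fun_eq_iff d_u_eqI)
  then show ?thesis
    using \<gamma>\<^sub>u\<^sub>u[OF assms(2)] by (auto intro: differentiableI_vector)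
qed

lemma tangent_orthogonal_normal:
  assumes "\<And>v. speed \<gamma> t v > 0" and "(\<lambda>v. d_u \<gamma> t v) differentiable (at u)"
  shows "tangent \<gamma> t u \<bullet> normal \<gamma> t u = 0"
proof -
  have "(\<lambda>v. (1 / norm (d_u \<gamma> t v)) *\<^sub>R d_u \<gamma> t v) differentiable (at u)"
    using assms by (intro derivative_intros differentiable_compose[where f = norm]) (auto simp: speed_def)
  then have "((\<lambda>v. tangent \<gamma> t v) has_vector_derivative d_u (\<lambda>(t', u'). tangent \<gamma> t' u') t u) (at u)"
    by (simp add: tangent_def d_s_def speed_def d_u_def vector_derivative_works)
  then have "tangent \<gamma> t u \<bullet> d_u (\<lambda>(t', u'). tangent \<gamma> t' u') t u = 0"
    by (rule has_vector_derivative_unit_orthogonal[OF tangent_inner_self[OF assms(1)]])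
  then show ?thesis
    by (simp add: normal_def d_s_def)
qed

lemma cross3_rotated_frame:
  fixes T N :: "real^3"
  assumes "T \<bullet> T = 1" "T \<bullet> N = 0"
  shows "cross3 (cos a *\<^sub>R N + sin a *\<^sub>R cross3 T N) T = - (- sin a *\<^sub>R N + cos a *\<^sub>R cross3 T N)"
proof -
  have "cross3 (cross3 T N) T = (T \<bullet> T) *\<^sub>R N - (N \<bullet> T) *\<^sub>R T"
    by (simp add: cross3_simps forall_3)
  then have "cross3 (cross3 T N) T = N"
    using assms by (simp add: inner_commute)
  then show ?thesis
    by (simp add: cross_add_left cross_mult_left cross_skew[of N T])
qed

lemma cross3_theta_normal_d_u:
  assumes "\<And>v. speed \<gamma> t v > 0" and "(\<lambda>v. d_u \<gamma> t v) differentiable (at u)"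
  shows "cross3 (theta_normal \<gamma> \<theta> t u) (d_u \<gamma> t u) = - (speed \<gamma> t u *\<^sub>R theta_binormal \<gamma> \<theta> t u)"
proof -
  have "d_u \<gamma> t u = speed \<gamma> t u *\<^sub>R tangent \<gamma> t u"
    using assms(1)[of u] by (simp add: tangent_def d_s_def)
  moreover have "cross3 (theta_normal \<gamma> \<theta> t u) (tangent \<gamma> t u) = - theta_binormal \<gamma> \<theta> t u"
    unfolding theta_normal_def theta_binormal_def binormal_def
    using assms by (intro cross3_rotated_frame tangent_inner_self tangent_orthogonal_normal)
  ultimately show ?thesis
    by (simp add: cross_mult_right)
qed

theorem mainTheorem13:
  fixes T :: real and \<gamma> :: "real \<times> real \<Rightarrow> real^3" and \<theta> :: "real \<times> real \<Rightarrow> real"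
  assumes "T > 0" and "framed_curvature_flow T \<gamma> \<theta>"
  shows "\<forall>t\<in>{0..<T}. (area_vector \<gamma> has_vector_derivative
           - curve_integral_ds \<gamma> t (\<lambda>u. curvature \<gamma> t u *\<^sub>R theta_binormal \<gamma> \<theta> t u))
         (at t within {0..<T})"
proof
  fix t assume t: "t \<in> {0..<T}"
  have smooth: "smooth_on ({0..<T} \<times> UNIV) \<gamma>"
    and periodic: "\<And>s u. s \<in> {0..<T} \<Longrightarrow> \<gamma> (s, u + 2*pi) = \<gamma> (s, u)"
    and speed: "\<And>u. speed \<gamma> t u > 0"
    and velocity: "\<And>u. ((\<lambda>s. \<gamma> (s, u)) has_vector_derivative
        curvature \<gamma> t u *\<^sub>R theta_normal \<gamma> \<theta> t u) (at t within {0..<T})"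
    using assms(2) t unfolding framed_curvature_flow_def by blast+
  have "cross3 (curvature \<gamma> t u *\<^sub>R theta_normal \<gamma> \<theta> t u) (d_u \<gamma> t u)
      = - (speed \<gamma> t u *\<^sub>R curvature \<gamma> t u *\<^sub>R theta_binormal \<gamma> \<theta> t u)" for u
    using cross3_theta_normal_d_u[OF speed smooth_on_imp_differentiable_d_u[OF smooth t], of \<theta>]
    by (simp add: cross_mult_left mult.commute)
  then show "(area_vector \<gamma> has_vector_derivative
      - curve_integral_ds \<gamma> t (\<lambda>u. curvature \<gamma> t u *\<^sub>R theta_binormal \<gamma> \<theta> t u)) (at t within {0..<T})"
    using area_vector_has_vector_derivative[OF smooth convex_real_interval(7) t
        at_within_atLeastLessThan_neq_bot[OF t] periodic velocity]
    by (simp add: curve_integral_ds_def integral_neg)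
qed

end
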